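(* Let $m,n$ be integers with $m\ge 3$ and $n\ge 2$. Then the set $E(m,n)=\{k \mid \text{there exists a primitive nonnegative tensor } \mathbb{A} \text{ of order } m \text{ and dimension } n \text{ with } \gamma(\mathbb{A})=k\}$ equals $\{1,2,\ldots,(n-1)^2+1\}$.
   Context: A tensor $\mathbb{A}=(a_{i_1i_2\ldots i_m})$ of order $m$ and dimension $n$ is an array with entries indexed by $i_1,\ldots,i_m\in[n]=\{1,\ldots,n\}$; it is nonnegative if all entries are real and $\ge 0$. For $x\in\mathbb{R}^n$, $\mathbb{A}x\in\mathbb{R}^n$ is the vector with $(\mathbb{A}x)_i=\sum_{i_2,\ldots,i_m=1}^n a_{ii_2\ldots i_m}x_{i_2}\cdots x_{i_m}$, and $x^{[r]}=(x_1^r,\ldots,x_n^r)^T$. Define $T_{\mathbb{A}}(x)=(\mathbb{A}x)^{[1/(m-1)]}$. A nonnegative tensor $\mathbb{A}$ is primitive if there is a positive integer $r$ such that $T_{\mathbb{A}}^r(x)>0$ (entrywise) for every nonnegative nonzero $x\in\mathbb{R}^n$; the smallest such $r$ is the primitive degree $\gamma(\mathbb{A})$. *)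

theory Defs
  imports Complex_Main
begin

text \<open>Indices are 0-based: [n] is rendered as {0..<n}. A tensor of order m and
dimension n is a function on index lists; only lists of length m with entries < n matter.
Vectors in R^n are functions nat => real, only entries i < n matter.\<close>

definition index_tuples :: "nat \<Rightarrow> nat \<Rightarrow> nat list set" where
  "index_tuples k n = {is. length is = k \<and> set is \<subseteq> {..<n}}"

definition nonneg_tensor :: "nat \<Rightarrow> nat \<Rightarrow> (nat list \<Rightarrow> real) \<Rightarrow> bool" where
  "nonneg_tensor m n A \<longleftrightarrow> (\<forall>is \<in> index_tuples m n. A is \<ge> 0)"

definition tensor_apply :: "nat \<Rightarrow> nat \<Rightarrow> (nat list \<Rightarrow> real) \<Rightarrow> (nat \<Rightarrow> real) \<Rightarrow> (nat \<Rightarrow> real)" where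
  "tensor_apply m n A x = (\<lambda>i. if i < n then
      (\<Sum>is \<in> index_tuples (m - 1) n. A (i # is) * prod_list (map x is)) else 0)"

definition T_map :: "nat \<Rightarrow> nat \<Rightarrow> (nat list \<Rightarrow> real) \<Rightarrow> (nat \<Rightarrow> real) \<Rightarrow> (nat \<Rightarrow> real)" where
  "T_map m n A x = (\<lambda>i. root (m - 1) (tensor_apply m n A x i))"

definition nonneg_nonzero_vec :: "nat \<Rightarrow> (nat \<Rightarrow> real) \<Rightarrow> bool" where
  "nonneg_nonzero_vec n x \<longleftrightarrow> (\<forall>i<n. x i \<ge> 0) \<and> (\<exists>i<n. x i \<noteq> 0)"

definition primitive_at :: "nat \<Rightarrow> nat \<Rightarrow> (nat list \<Rightarrow> real) \<Rightarrow> nat \<Rightarrow> bool" where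
  "primitive_at m n A r \<longleftrightarrow> 0 < r \<and>
     (\<forall>x. nonneg_nonzero_vec n x \<longrightarrow> (\<forall>i<n. ((T_map m n A) ^^ r) x i > 0))"

definition primitive_tensor :: "nat \<Rightarrow> nat \<Rightarrow> (nat list \<Rightarrow> real) \<Rightarrow> bool" where
  "primitive_tensor m n A \<longleftrightarrow> nonneg_tensor m n A \<and> (\<exists>r. primitive_at m n A r)"

definition primitive_degree :: "nat \<Rightarrow> nat \<Rightarrow> (nat list \<Rightarrow> real) \<Rightarrow> nat" where
  "primitive_degree m n A = (LEAST r. primitive_at m n A r)"

definition E_set :: "nat \<Rightarrow> nat \<Rightarrow> nat set" where
  "E_set m n = {k. \<exists>A. primitive_tensor m n A \<and> primitive_degree m n A = k}"

end

theory Submission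
  imports Defs
begin

text \<open>Passing to supports, T_A acts on nonempty subsets of [n] as a monotone set map F, and
  A is primitive with exponent r iff F^r sends every nonempty set to [n]. Wielandt's argument
  bounds the exponent: from any j one reaches within a steps a point y lying on a closed walk
  of length c \<le> n - 1 with a + c \<le> n; the sets (F^c)^k {y} grow strictly until they are
  full, so F^((n-1) c + a) {j} = [n] and (n-1) c + a \<le> (n-1)^2 + 1.

  Conversely every degree is attained by a tensor whose entries depend only on the first three
  indices, so that F is the out-neighbourhood map of a digraph plus one hyperedge {a, b} \<rightarrow> B.
  Degrees k \<le> n come from a path that becomes complete after k - 1 steps. For k > n start
  from the Wielandt digraph, whose orbit of {0} consists of circular arcs growing one step at
  a time; the hyperedge joins the two ends of the arc reached at time k - 1 to the
  complementary arc, so the orbit becomes full exactly at time k, while on the earlier arcs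
  the hyperedge adds nothing new.\<close>

section \<open>Primitive monotone set maps\<close>

lemma funpow_reach_trans:
  assumes "mono F" "u \<in> (F ^^ a) {v}" "z \<in> (F ^^ b) {u}"
  shows "z \<in> (F ^^ (b + a)) {v}"
proof -
  have "(F ^^ b) {u} \<subseteq> (F ^^ b) ((F ^^ a) {v})"
    using assms by (intro funpow_mono) auto
  with assms(3) show ?thesis by (auto simp: funpow_add)
qed

lemma wielandt_arith:
  fixes a c n :: nat
  assumes "2 \<le> n" "1 \<le> c" "c \<le> n - 1" "a + c \<le> n"
  shows "(n - 1) * c + a \<le> (n - 1)^2 + 1"
proof -
  obtain p where p: "n = p + 2" using assms(1) by (metis add.commute le_Suc_ex)
  have "p * c \<le> p * (p + 1)" using assms(3) p by (intro mult_le_mono2) simp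
  then show ?thesis using assms p by (simp add: power2_eq_square algebra_simps)
qed

locale primitive_set_map =
  fixes F :: "nat set \<Rightarrow> nat set" and n r :: nat
  assumes mono: "mono F"
    and map_empty: "F {} = {}"
    and map_subset: "F S \<subseteq> {..<n}"
    and two_le_n: "2 \<le> n"
    and exponent_pos: "0 < r"
    and primitive: "S \<noteq> {} \<Longrightarrow> S \<subseteq> {..<n} \<Longrightarrow> (F ^^ r) S = {..<n}"
begin

lemma funpow_empty: "(F ^^ k) {} = {}"
  by (induction k) (auto simp: map_empty)

lemma funpow_subset: "S \<subseteq> {..<n} \<Longrightarrow> (F ^^ k) S \<subseteq> {..<n}"
  by (cases k) (auto simp: map_subset)

lemma singleton_image_nonempty:
  assumes "x < n" shows "F {x} \<noteq> {}"
proof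
  assume "F {x} = {}"
  moreover obtain k where "r = Suc k" using exponent_pos not0_implies_Suc by blast
  ultimately have "(F ^^ r) {x} = {}"
    by (simp add: funpow_Suc_right funpow_empty del: funpow.simps)
  with primitive[of "{x}"] assms show False by auto
qed

lemma map_full: "F {..<n} = {..<n}"
proof -
  have "F {..<n} = F ((F ^^ r) {0})" using primitive[of "{0}"] two_le_n by auto
  also have "\<dots> = (F ^^ r) (F {0})" by (simp add: funpow_swap1)
  also have "\<dots> = {..<n}"
    using primitive singleton_image_nonempty[of 0] two_le_n map_subset by auto
  finally show ?thesis .
qed

lemma funpow_full: "(F ^^ k) {..<n} = {..<n}"
  by (induction k) (auto simp: map_full)

lemma funpow_full_mono:
  assumes "(F ^^ a) S = {..<n}" "a \<le> b" shows "(F ^^ b) S = {..<n}"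
proof -
  have "b = (b - a) + a" using assms(2) by simp
  then have "(F ^^ b) S = (F ^^ (b - a)) ((F ^^ a) S)"
    by (metis funpow_add o_apply)
  with assms(1) show ?thesis by (simp add: funpow_full)
qed

lemma invariant_eq_full:
  assumes "T \<noteq> {}" "T \<subseteq> {..<n}" "1 \<le> c" "(F ^^ c) T = T"
  shows "T = {..<n}"
proof -
  have "((F ^^ c) ^^ q) T = T" for q by (induction q) (auto simp: assms(4))
  then have "(F ^^ (c * r)) T = T" by (metis funpow_mult mult.commute)
  moreover have "(F ^^ (c * r)) T = {..<n}"
    using funpow_full_mono[OF primitive[OF assms(1,2)]] assms(3) by simp
  ultimately show ?thesis by simp
qed

text \<open>On the closed walk through y the sets (F^c)^k {y} grow strictly until they are
  full, since a proper nonempty invariant set of F^c contradicts primitivity.\<close>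
lemma cycle_funpow_full:
  assumes y: "y < n" and c: "1 \<le> c" and cycle: "y \<in> (F ^^ c) {y}"
  shows "(F ^^ ((n - 1) * c)) {y} = {..<n}"
proof -
  define orb where "orb k = ((F ^^ c) ^^ k) {y}" for k
  have orb_subset: "orb k \<subseteq> {..<n}" for k
    unfolding orb_def using funpow_subset[of "{y}" "c * k"] y by (simp add: funpow_mult mult.commute)
  have orb_Suc: "orb (Suc k) = (F ^^ c) (orb k)" for k
    by (simp add: orb_def)
  have orb_mono: "orb k \<subseteq> orb (Suc k)" for k
  proof -
    have "((F ^^ c) ^^ k) {y} \<subseteq> ((F ^^ c) ^^ k) ((F ^^ c) {y})"
      using cycle by (intro funpow_mono monoI funpow_mono[OF mono]) auto
    then show ?thesis by (simp add: orb_def funpow_swap1)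
  qed
  have y_in: "y \<in> orb k" for k
  proof (induction k)
    case (Suc k) with orb_mono show ?case by blast
  qed (simp add: orb_def)
  have grow: "orb k = {..<n} \<or> Suc k \<le> card (orb k)" for k
  proof (induction k)
    case 0 show ?case by (simp add: orb_def)
  next
    case (Suc k)
    show ?case
    proof (cases "orb k = {..<n}")
      case True then show ?thesis by (simp add: orb_Suc funpow_full)
    next
      case False
      then have "orb (Suc k) \<noteq> orb k"
        using invariant_eq_full[of "orb k" c] y_in orb_subset c by (auto simp: orb_Suc)
      then have "orb k \<subset> orb (Suc k)" using orb_mono by blast
      then have "card (orb k) < card (orb (Suc k))"
        by (meson orb_subset finite_lessThan finite_subset psubset_card_mono)
      with False Suc.IH show ?thesis by simp
    qed
  qed
  have "orb (n - 1) = {..<n}"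
  proof (rule ccontr)
    assume "orb (n - 1) \<noteq> {..<n}"
    then have "card {..<n} \<le> card (orb (n - 1))" using grow[of "n - 1"] two_le_n by simp
    then show False
      using \<open>orb (n - 1) \<noteq> {..<n}\<close> orb_subset card_seteq finite_lessThan by blast
  qed
  then show ?thesis by (simp add: orb_def funpow_mult mult.commute)
qed

lemma exists_walk:
  assumes "j < n"
  obtains w where "w 0 = j" "\<And>t. w t < n" "\<And>t. w (Suc t) \<in> F {w t}"
proof -
  define w where "w = rec_nat j (\<lambda>_ z. SOME z'. z' \<in> F {z})"
  have "w t < n \<and> w (Suc t) \<in> F {w t}" for t
  proof (induction t)
    case 0
    have "w (Suc 0) \<in> F {w 0}"
      using singleton_image_nonempty[OF assms] by (simp add: w_def some_in_eq)
    then show ?case using assms by (simp add: w_def)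
  next
    case (Suc t)
    then have "w (Suc t) < n" using map_subset by blast
    moreover have "w (Suc (Suc t)) \<in> F {w (Suc t)}"
      using singleton_image_nonempty[OF calculation] by (simp add: w_def some_in_eq)
    ultimately show ?case by simp
  qed
  then show ?thesis by (intro that[of w]) (auto simp: w_def)
qed

lemma walk_reaches:
  assumes step: "\<And>t. w (Suc t) \<in> F {w t}" and "k \<le> l"
  shows "w l \<in> (F ^^ (l - k)) {w k}"
  using \<open>k \<le> l\<close>
proof (induction l)
  case (Suc l)
  show ?case
  proof (cases "k = Suc l")
    case False
    with Suc have "w l \<in> (F ^^ (l - k)) {w k}" by simp
    from funpow_reach_trans[OF mono this, of "w (Suc l)" 1] step[of l] False Suc.prems
    show ?thesis by (simp add: Suc_diff_le)
  qed simp
qed simp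

lemma not_all_singleton_images: "\<exists>x<n. \<nexists>u. F {x} = {u}"
proof (rule ccontr)
  assume "\<not> ?thesis"
  then have single: "\<exists>u. F {x} = {u}" if "x < n" for x using that by blast
  have "\<exists>u. (F ^^ q) {0} = {u} \<and> u < n" for q
  proof (induction q)
    case (Suc q)
    then obtain u where "(F ^^ q) {0} = {u}" "u < n" by blast
    moreover obtain v where "F {u} = {v}" using single[OF \<open>u < n\<close>] by blast
    ultimately show ?case using map_subset[of "{u}"] by auto
  qed (use two_le_n in simp)
  then obtain u where "{..<n} = {u}" using primitive[of "{0}"] two_le_n by force
  then show False using two_le_n card_lessThan[of n] by simp
qed

text \<open>Since F does not permute singletons, some vertex w t of the Hamiltonian cycle has a
  second successor w k; this chord closes a cycle w k ... w t or j ... w t, w k ... w n.\<close>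
lemma hamiltonian_walk_short_cycle:
  assumes walk: "\<And>t. w t < n" "\<And>t. w (Suc t) \<in> F {w t}"
    and onto: "w ` {..<n} = {..<n}" and closed: "w n = w 0"
  obtains a c y where "y < n" "y \<in> (F ^^ a) {w 0}" "1 \<le> c" "c \<le> n - 1" "a + c \<le> n"
    "y \<in> (F ^^ c) {y}"
proof -
  obtain x where "x < n" and "\<nexists>u. F {x} = {u}" using not_all_singleton_images by blast
  moreover have "x \<in> w ` {..<n}" using onto \<open>x < n\<close> by simp
  ultimately obtain t where t: "t < n" "\<nexists>u. F {w t} = {u}" by auto
  then obtain z where z: "z \<in> F {w t}" "z \<noteq> w (Suc t)" using walk(2)[of t] by blast
  moreover have "z \<in> w ` {..<n}" using onto map_subset z(1) by blast
  ultimately obtain k where k: "k < n" "z = w k" by auto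
  have reach: "w l \<in> (F ^^ (l - i)) {w i}" if "i \<le> l" for i l
    using walk_reaches[of w, OF walk(2) that] .
  show ?thesis
  proof (cases "k \<le> t")
    case True
    have "1 + (t - k) \<le> n - 1"
    proof (rule ccontr)
      assume "\<not> 1 + (t - k) \<le> n - 1"
      then have "k = 0" "Suc t = n" using t(1) True by auto
      then show False using z k closed by simp
    qed
    moreover have "w k \<in> (F ^^ (1 + (t - k))) {w k}"
      using funpow_reach_trans[OF mono reach[OF True], of "w k" 1] z k by simp
    ultimately show ?thesis
      using that[of "w k" k "1 + (t - k)"] walk(1) reach[of 0 k] True t(1) by simp
  next
    case False
    with z k have "Suc t < k" by (cases "k = Suc t") auto
    have "w k \<in> (F ^^ (1 + t)) {w 0}"
      using funpow_reach_trans[OF mono reach[of 0 t], of "w k" 1] z k by simp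
    from funpow_reach_trans[OF mono this reach[of k n]]
    have "w 0 \<in> (F ^^ (n - k + (1 + t))) {w 0}" using k closed by simp
    then show ?thesis
      using that[of "w 0" 0 "n - k + (1 + t)"] walk(1) \<open>Suc t < k\<close> k by simp
  qed
qed

lemma short_cycle_reachable:
  assumes "j < n"
  obtains a c y where "y < n" "y \<in> (F ^^ a) {j}" "1 \<le> c" "c \<le> n - 1" "a + c \<le> n"
    "y \<in> (F ^^ c) {y}"
proof -
  obtain w where w: "w 0 = j" "\<And>t. w t < n" "\<And>t. w (Suc t) \<in> F {w t}"
    using exists_walk[OF assms] by blast
  have reach: "w l \<in> (F ^^ (l - i)) {w i}" if "i \<le> l" for i l
    using walk_reaches[of w, OF w(3) that] .
  show ?thesis
  proof (cases "inj_on w {..<n}")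
    case False
    then obtain a b where "a < n" "b < n" "a \<noteq> b" "w a = w b" unfolding inj_on_def by auto
    then obtain a b where "a < b" "b < n" "w a = w b" by (metis linorder_neqE_nat)
    then show ?thesis using that[of "w a" a "b - a"] reach[of 0 a] reach[of a b] w by simp
  next
    case True
    then have onto: "w ` {..<n} = {..<n}"
      using w(2) by (intro card_subset_eq) (auto simp: card_image)
    show ?thesis
    proof (cases "w n = w 0")
      case True
      from hamiltonian_walk_short_cycle[OF w(2,3) onto True] that show ?thesis
        unfolding w(1) .
    next
      case False
      have "w n \<in> w ` {..<n}" using onto w(2)[of n] by simp
      then obtain k where k: "k < n" "w n = w k" by auto
      with False have "0 < k" by (cases k) auto
      with k show ?thesis
        using that[of "w k" k "n - k"] reach[of 0 k] reach[of k n] w by simp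
    qed
  qed
qed

theorem funpow_wielandt_bound:
  assumes "S \<noteq> {}" "S \<subseteq> {..<n}"
  shows "(F ^^ ((n - 1)^2 + 1)) S = {..<n}"
proof -
  obtain j where "j \<in> S" using assms(1) by blast
  then have j: "j < n" using assms(2) by blast
  obtain a c y where acy: "y < n" "y \<in> (F ^^ a) {j}" "1 \<le> c" "c \<le> n - 1" "a + c \<le> n"
    "y \<in> (F ^^ c) {y}"
    using short_cycle_reachable[OF j] .
  have "{..<n} = (F ^^ ((n - 1) * c)) {y}" using cycle_funpow_full acy by simp
  also have "\<dots> \<subseteq> (F ^^ ((n - 1) * c)) ((F ^^ a) {j})"
    using acy(2) by (intro funpow_mono[OF mono]) simp
  finally have "{..<n} \<subseteq> (F ^^ ((n - 1) * c + a)) {j}" by (simp add: funpow_add)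
  moreover have "(F ^^ ((n - 1) * c + a)) {j} \<subseteq> {..<n}" using funpow_subset j by simp
  ultimately have "(F ^^ ((n - 1) * c + a)) {j} = {..<n}" by blast
  then have "(F ^^ ((n - 1)^2 + 1)) {j} = {..<n}"
    using funpow_full_mono wielandt_arith[OF two_le_n acy(3-5)] by blast
  moreover have "(F ^^ ((n - 1)^2 + 1)) {j} \<subseteq> (F ^^ ((n - 1)^2 + 1)) S"
    using \<open>j \<in> S\<close> by (intro funpow_mono[OF mono]) simp
  ultimately show ?thesis using funpow_subset[OF assms(2)] by blast
qed

end

section \<open>Support maps of nonnegative tensors\<close>

definition support :: "nat \<Rightarrow> (nat \<Rightarrow> real) \<Rightarrow> nat set" where
  "support n x = {i. i < n \<and> 0 < x i}"

definition support_map :: "nat \<Rightarrow> nat \<Rightarrow> (nat list \<Rightarrow> real) \<Rightarrow> nat set \<Rightarrow> nat set" where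
  "support_map m n A S =
     {i. i < n \<and> (\<exists>is \<in> index_tuples (m - 1) n. set is \<subseteq> S \<and> 0 < A (i # is))}"

lemma finite_index_tuples: "finite (index_tuples k n)"
proof -
  have "index_tuples k n = {xs. set xs \<subseteq> {..<n} \<and> length xs = k}"
    by (auto simp: index_tuples_def)
  then show ?thesis by (simp add: finite_lists_length_eq)
qed

lemma mono_support_map: "mono (support_map m n A)"
  unfolding support_map_def by (rule monoI) blast

lemma support_map_empty: "2 \<le> m \<Longrightarrow> support_map m n A {} = {}"
  unfolding support_map_def index_tuples_def by auto

lemma support_map_subset: "support_map m n A S \<subseteq> {..<n}"
  unfolding support_map_def by auto

lemma prod_list_pos_iff:
  fixes x :: "'a \<Rightarrow> real"
  assumes "\<forall>v \<in> set vs. 0 \<le> x v"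
  shows "0 < prod_list (map x vs) \<longleftrightarrow> (\<forall>v \<in> set vs. 0 < x v)"
  using assms by (induction vs) (auto simp: zero_less_mult_iff prod_list_nonneg)

lemma sum_pos_iff_ex:
  fixes f :: "'a \<Rightarrow> 'b :: {ordered_comm_monoid_add, linorder}"
  assumes "finite I" "\<And>i. i \<in> I \<Longrightarrow> 0 \<le> f i"
  shows "0 < sum f I \<longleftrightarrow> (\<exists>i \<in> I. 0 < f i)"
  using sum_nonneg[of I f] sum_nonneg_eq_0_iff[OF assms] assms(2) by (auto simp: order_less_le)

lemma tensor_apply_term_nonneg:
  fixes x :: "nat \<Rightarrow> real"
  assumes A: "nonneg_tensor m n A" and m: "1 \<le> m" and x: "\<forall>i<n. 0 \<le> x i"
    and i: "i < n" and "is": "is \<in> index_tuples (m - 1) n"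
  shows "0 \<le> A (i # is)" "0 \<le> prod_list (map x is)"
proof -
  have "i # is \<in> index_tuples m n" using i "is" m by (auto simp: index_tuples_def)
  then show "0 \<le> A (i # is)" using A by (simp add: nonneg_tensor_def)
  show "0 \<le> prod_list (map x is)"
    using "is" x by (intro prod_list_nonneg) (auto simp: index_tuples_def)
qed

lemma tensor_apply_nonneg:
  assumes "nonneg_tensor m n A" "1 \<le> m" "\<forall>i<n. 0 \<le> x i"
  shows "0 \<le> tensor_apply m n A x i"
  using tensor_apply_term_nonneg[OF assms]
  by (auto simp: tensor_apply_def intro!: sum_nonneg)

lemma tensor_apply_pos_iff:
  assumes A: "nonneg_tensor m n A" and m: "1 \<le> m" and x: "\<forall>i<n. 0 \<le> x i" and i: "i < n"
  shows "0 < tensor_apply m n A x i \<longleftrightarrow> i \<in> support_map m n A (support n x)"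
proof -
  let ?t = "\<lambda>is. A (i # is) * prod_list (map x is)"
  have t_nonneg: "0 \<le> ?t is" if "is \<in> index_tuples (m - 1) n" for "is"
    using tensor_apply_term_nonneg[OF A m x i that] by simp
  have t_pos: "0 < ?t is \<longleftrightarrow> set is \<subseteq> support n x \<and> 0 < A (i # is)"
    if "is": "is \<in> index_tuples (m - 1) n" for "is"
  proof -
    have "\<forall>v \<in> set is. 0 \<le> x v" using "is" x by (auto simp: index_tuples_def)
    then have "0 < prod_list (map x is) \<longleftrightarrow> set is \<subseteq> support n x"
      using "is" by (auto simp: prod_list_pos_iff support_def index_tuples_def)
    then show ?thesis
      using tensor_apply_term_nonneg[OF A m x i "is"] by (auto simp: zero_less_mult_iff)
  qed
  have "0 < tensor_apply m n A x i \<longleftrightarrow> (\<exists>is \<in> index_tuples (m - 1) n. 0 < ?t is)"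
    using i sum_pos_iff_ex[OF finite_index_tuples t_nonneg] by (simp add: tensor_apply_def)
  also have "\<dots> \<longleftrightarrow> i \<in> support_map m n A (support n x)"
    using i t_pos by (auto simp: support_map_def)
  finally show ?thesis .
qed

lemma T_map_nonneg:
  assumes "nonneg_tensor m n A" "2 \<le> m" "\<forall>i<n. 0 \<le> x i"
  shows "\<forall>i<n. 0 \<le> T_map m n A x i"
  using tensor_apply_nonneg[of m n A x] assms by (simp add: T_map_def)

lemma support_T_map:
  assumes "nonneg_tensor m n A" "2 \<le> m" "\<forall>i<n. 0 \<le> x i"
  shows "support n (T_map m n A x) = support_map m n A (support n x)"
proof -
  have "i \<in> support n (T_map m n A x) \<longleftrightarrow> i \<in> support_map m n A (support n x)" for i
  proof (cases "i < n")
    case True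
    then show ?thesis
      using tensor_apply_pos_iff[OF assms(1) _ assms(3) True] assms(2)
      by (simp add: support_def T_map_def)
  qed (auto simp: support_def support_map_def)
  then show ?thesis by blast
qed

lemma support_T_map_funpow:
  assumes A: "nonneg_tensor m n A" and m: "2 \<le> m" and x: "\<forall>i<n. 0 \<le> x i"
  shows "support n ((T_map m n A ^^ r) x) = (support_map m n A ^^ r) (support n x)"
proof -
  have "(\<forall>i<n. 0 \<le> (T_map m n A ^^ r) x i) \<and>
      support n ((T_map m n A ^^ r) x) = (support_map m n A ^^ r) (support n x)"
  proof (induction r)
    case (Suc r)
    then show ?case using T_map_nonneg[OF A m] support_T_map[OF A m] by simp
  qed (use x in simp)
  then show ?thesis ..
qed

lemma primitive_at_iff_support_map:
  assumes A: "nonneg_tensor m n A" and m: "2 \<le> m"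
  shows "primitive_at m n A r \<longleftrightarrow>
    0 < r \<and> (\<forall>S. S \<noteq> {} \<and> S \<subseteq> {..<n} \<longrightarrow> (support_map m n A ^^ r) S = {..<n})"
proof -
  have iff: "nonneg_nonzero_vec n x \<longleftrightarrow> (\<forall>i<n. 0 \<le> x i) \<and> support n x \<noteq> {}" for x
    by (auto simp: nonneg_nonzero_vec_def support_def order_less_le)
  have pos_iff: "(\<forall>i<n. 0 < (T_map m n A ^^ r) x i) \<longleftrightarrow> (support_map m n A ^^ r) (support n x) = {..<n}"
    if "\<forall>i<n. 0 \<le> x i" for x
    using support_T_map_funpow[OF A m that, of r, symmetric] by (auto simp: support_def)
  have "(\<forall>x. nonneg_nonzero_vec n x \<longrightarrow> (\<forall>i<n. 0 < (T_map m n A ^^ r) x i)) \<longleftrightarrow>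
      (\<forall>S. S \<noteq> {} \<and> S \<subseteq> {..<n} \<longrightarrow> (support_map m n A ^^ r) S = {..<n})"
  proof (intro iffI allI impI)
    fix S :: "nat set" assume H: "\<forall>x. nonneg_nonzero_vec n x \<longrightarrow> (\<forall>i<n. 0 < (T_map m n A ^^ r) x i)"
      and S: "S \<noteq> {} \<and> S \<subseteq> {..<n}"
    define x :: "nat \<Rightarrow> real" where "x i = (if i \<in> S then 1 else 0)" for i
    have x: "\<forall>i<n. 0 \<le> x i" by (simp add: x_def)
    have supp: "support n x = S" using S by (auto simp: support_def x_def)
    then have "\<forall>i<n. 0 < (T_map m n A ^^ r) x i" using H iff x S by blast
    then show "(support_map m n A ^^ r) S = {..<n}" using pos_iff[OF x] supp by simp
  next
    fix x i assume H: "\<forall>S. S \<noteq> {} \<and> S \<subseteq> {..<n} \<longrightarrow> (support_map m n A ^^ r) S = {..<n}"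
      and "nonneg_nonzero_vec n x" and "i < n"
    then have x: "\<forall>i<n. 0 \<le> x i" and "support n x \<noteq> {}" using iff by auto
    moreover have "support n x \<subseteq> {..<n}" by (auto simp: support_def)
    ultimately show "0 < (T_map m n A ^^ r) x i" using H pos_iff[OF x] \<open>i < n\<close> by blast
  qed
  then show ?thesis by (simp add: primitive_at_def)
qed

lemma primitive_degree_bounds:
  assumes m: "2 \<le> m" and n: "2 \<le> n" and P: "primitive_tensor m n A"
  shows "primitive_degree m n A \<in> {1..(n - 1)^2 + 1}"
proof -
  obtain r where A: "nonneg_tensor m n A" and r: "primitive_at m n A r"
    using P by (auto simp: primitive_tensor_def)
  interpret primitive_set_map "support_map m n A" n r
    using r primitive_at_iff_support_map[OF A m] n mono_support_map support_map_empty[OF m]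
      support_map_subset by unfold_locales auto
  have "primitive_at m n A ((n - 1)^2 + 1)"
    using primitive_at_iff_support_map[OF A m] funpow_wielandt_bound by simp
  then have "primitive_degree m n A \<le> (n - 1)^2 + 1"
    unfolding primitive_degree_def by (rule Least_le)
  moreover have "primitive_at m n A (primitive_degree m n A)"
    unfolding primitive_degree_def using r by (rule LeastI)
  ultimately show ?thesis by (simp add: primitive_at_def)
qed

lemma primitive_degree_eqI:
  assumes A: "nonneg_tensor m n A" and m: "2 \<le> m" and k: "1 \<le> k"
    and full: "\<And>j. j < n \<Longrightarrow> (support_map m n A ^^ k) {j} = {..<n}"
    and j0: "j0 < n" "\<And>r. r < k \<Longrightarrow> (support_map m n A ^^ r) {j0} \<noteq> {..<n}"
  shows "primitive_tensor m n A" "primitive_degree m n A = k"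
proof -
  let ?F = "support_map m n A"
  have "(?F ^^ k) S = {..<n}" if S: "S \<noteq> {}" "S \<subseteq> {..<n}" for S
  proof -
    obtain j where j: "j \<in> S" using S(1) by blast
    have "(?F ^^ k) {j} \<subseteq> (?F ^^ k) S"
      using j by (intro funpow_mono[OF mono_support_map]) simp
    moreover have "(?F ^^ k) S \<subseteq> {..<n}"
      using k support_map_subset by (cases k) auto
    ultimately show ?thesis using full[of j] j S(2) by auto
  qed
  then have k_prim: "primitive_at m n A k" using primitive_at_iff_support_map[OF A m] k by auto
  have "\<not> primitive_at m n A r" if "r < k" for r
  proof
    assume "primitive_at m n A r"
    then have "(?F ^^ r) {j0} = {..<n}" using primitive_at_iff_support_map[OF A m] j0(1) by auto
    with j0(2)[OF that] show False ..
  qed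
  then show "primitive_degree m n A = k" unfolding primitive_degree_def
    using k_prim by (intro Least_equality) (auto simp: not_less[symmetric])
  show "primitive_tensor m n A" using A k_prim by (auto simp: primitive_tensor_def)
qed

section \<open>Tensors of a digraph with one hyperedge\<close>

definition hyper_step :: "(nat \<Rightarrow> nat set) \<Rightarrow> nat \<Rightarrow> nat \<Rightarrow> nat set \<Rightarrow> nat set \<Rightarrow> nat set" where
  "hyper_step g a b B S = (\<Union>x\<in>S. g x) \<union> (if a \<in> S \<and> b \<in> S then B else {})"

definition hyper_tensor :: "(nat \<Rightarrow> nat set) \<Rightarrow> nat \<Rightarrow> nat \<Rightarrow> nat set \<Rightarrow> nat list \<Rightarrow> real" where
  "hyper_tensor g a b B is = (case is of
      i # x # y # _ \<Rightarrow> if i \<in> g x \<union> g y \<or> (x = a \<and> y = b \<and> i \<in> B) then 1 else 0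
    | _ \<Rightarrow> 0)"

lemma hyper_tensor_nonneg: "nonneg_tensor m n (hyper_tensor g a b B)"
  unfolding nonneg_tensor_def hyper_tensor_def by (auto split: list.splits)

lemma hyper_step_subset:
  assumes "S \<subseteq> {..<n}" "\<And>x. x < n \<Longrightarrow> g x \<subseteq> {..<n}" "B \<subseteq> {..<n}"
  shows "hyper_step g a b B S \<subseteq> {..<n}"
  using assms by (auto simp: hyper_step_def)

lemma support_map_hyper_tensor:
  assumes m: "3 \<le> m" and S: "S \<subseteq> {..<n}"
    and g: "\<And>x. x < n \<Longrightarrow> g x \<subseteq> {..<n}" and B: "B \<subseteq> {..<n}"
  shows "support_map m n (hyper_tensor g a b B) S = hyper_step g a b B S"
proof (intro equalityI subsetI)
  fix i assume "i \<in> support_map m n (hyper_tensor g a b B) S"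
  then obtain js where i: "i < n" and js: "length js = m - 1" "set js \<subseteq> S"
    and pos: "0 < hyper_tensor g a b B (i # js)"
    unfolding support_map_def index_tuples_def by blast
  obtain x y rest where "js = x # y # rest"
    using js(1) m by (cases js; cases "tl js") auto
  with pos js(2) show "i \<in> hyper_step g a b B S"
    by (auto simp: hyper_tensor_def hyper_step_def split: if_splits)
next
  have entry: "i \<in> support_map m n (hyper_tensor g a b B) S"
    if "x \<in> S" "y \<in> S" "i < n" "i \<in> g x \<union> g y \<or> (x = a \<and> y = b \<and> i \<in> B)" for i x y
  proof -
    define js where "js = x # y # replicate (m - 3) y"
    have "js \<in> index_tuples (m - 1) n" "set js \<subseteq> S"
      using that S m by (auto simp: js_def index_tuples_def)
    moreover have "0 < hyper_tensor g a b B (i # js)"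
      using that(4) by (simp add: js_def hyper_tensor_def)
    ultimately show ?thesis using that(3) unfolding support_map_def by blast
  qed
  fix i assume "i \<in> hyper_step g a b B S"
  then show "i \<in> support_map m n (hyper_tensor g a b B) S"
    using entry g B S unfolding hyper_step_def by (auto split: if_splits) blast+
qed

lemma funpow_support_map_hyper_tensor:
  assumes m: "3 \<le> m" and S: "S \<subseteq> {..<n}"
    and g: "\<And>x. x < n \<Longrightarrow> g x \<subseteq> {..<n}" and B: "B \<subseteq> {..<n}"
  shows "(support_map m n (hyper_tensor g a b B) ^^ t) S = (hyper_step g a b B ^^ t) S"
proof -
  have "(support_map m n (hyper_tensor g a b B) ^^ t) S = (hyper_step g a b B ^^ t) S
      \<and> (hyper_step g a b B ^^ t) S \<subseteq> {..<n}"
  proof (induction t)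
    case (Suc t)
    then show ?case using support_map_hyper_tensor[OF m _ g B] hyper_step_subset[OF _ g B] by simp
  qed (use S in simp)
  then show ?thesis ..
qed

lemma hyper_tensor_degree_in_E_set:
  assumes m: "3 \<le> m" and k: "1 \<le> k"
    and g: "\<And>x. x < n \<Longrightarrow> g x \<subseteq> {..<n}" and B: "B \<subseteq> {..<n}"
    and full: "\<And>j. j < n \<Longrightarrow> (hyper_step g a b B ^^ k) {j} = {..<n}"
    and j0: "j0 < n" "\<And>r. r < k \<Longrightarrow> (hyper_step g a b B ^^ r) {j0} \<noteq> {..<n}"
  shows "k \<in> E_set m n"
proof -
  let ?A = "hyper_tensor g a b B"
  have iter: "(support_map m n ?A ^^ t) {j} = (hyper_step g a b B ^^ t) {j}" if "j < n" for t j
    using funpow_support_map_hyper_tensor[OF m _ g B] that by simp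
  have "2 \<le> m" using m by simp
  moreover have "(support_map m n ?A ^^ k) {j} = {..<n}" if "j < n" for j
    using iter full that by simp
  moreover have "(support_map m n ?A ^^ r) {j0} \<noteq> {..<n}" if "r < k" for r
    using iter j0 that by simp
  ultimately have "primitive_tensor m n ?A" "primitive_degree m n ?A = k"
    using primitive_degree_eqI[OF hyper_tensor_nonneg _ k _ j0(1)] by blast+
  then show ?thesis unfolding E_set_def by blast
qed

definition path_succ :: "nat \<Rightarrow> nat \<Rightarrow> nat \<Rightarrow> nat set" where
  "path_succ n k x = (if k - 1 \<le> x then {..<n} else {Suc x})"

lemma funpow_path_step:
  assumes j: "j < n" and k: "1 \<le> k" "k \<le> n"
  shows "(hyper_step (path_succ n k) a b {} ^^ t) {j} = (if t = 0 \<or> j + t < k then {j + t} else {..<n})"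
proof -
  let ?F = "hyper_step (path_succ n k) a b {}"
  have "path_succ n k (n - 1) = {..<n}" using diff_le_mono[OF k(2), of 1] by (simp add: path_succ_def)
  moreover have "n - 1 \<in> {..<n}" using k by simp
  ultimately have "{..<n} \<subseteq> ?F {..<n}" unfolding hyper_step_def by blast
  moreover have "?F {..<n} \<subseteq> {..<n}" using k by (auto simp: hyper_step_def path_succ_def)
  ultimately have full: "?F {..<n} = {..<n}" by blast
  show ?thesis
  proof (induction t)
    case (Suc t)
    show ?case
    proof (cases "t = 0 \<or> j + t < k")
      case True
      then have "j + t < n" using j k by auto
      then show ?thesis using Suc True by (auto simp: hyper_step_def path_succ_def)
    qed (use Suc full in simp)
  qed simp
qed

lemma small_degree_in_E_set:
  assumes m: "3 \<le> m" and n: "2 \<le> n" and k: "1 \<le> k" "k \<le> n"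
  shows "k \<in> E_set m n"
proof (rule hyper_tensor_degree_in_E_set[OF m k(1)])
  show "path_succ n k x \<subseteq> {..<n}" if "x < n" for x
    using that k by (auto simp: path_succ_def)
  show "(hyper_step (path_succ n k) 0 0 {} ^^ k) {j} = {..<n}" if "j < n" for j
    using funpow_path_step[OF that k] k by simp
  show "(hyper_step (path_succ n k) 0 0 {} ^^ r) {0} \<noteq> {..<n}" if "r < k" for r
  proof
    assume "(hyper_step (path_succ n k) 0 0 {} ^^ r) {0} = {..<n}"
    then have "card {r} = card {..<n}" using funpow_path_step[of 0 n k] n k that by simp
    with n show False by simp
  qed
qed (use n in auto)

section \<open>Circular arcs and the Wielandt digraph\<close>

text \<open>arc_dist n e x is the number of forward steps from x to e on the n-cycle, so
  arc n L e consists of the L points e, e - 1, ..., e - L + 1 (mod n).\<close>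
definition arc_dist :: "nat \<Rightarrow> nat \<Rightarrow> nat \<Rightarrow> nat" where
  "arc_dist n e x = (e + n - x) mod n"

definition arc :: "nat \<Rightarrow> nat \<Rightarrow> nat \<Rightarrow> nat set" where
  "arc n L e = {x. x < n \<and> arc_dist n e x < L}"

lemma arc_dist_eq:
  assumes "x < n" "e < n"
  shows "arc_dist n e x = (if x \<le> e then e - x else e + n - x)"
proof (cases "x \<le> e")
  case True
  then have "arc_dist n e x = (e - x + n) mod n" by (simp add: arc_dist_def)
  also have "\<dots> = e - x" using assms by (simp only: mod_add_self2) simp
  finally show ?thesis using True by simp
qed (use assms in \<open>simp add: arc_dist_def\<close>)

lemma arc_dist_lt: "0 < n \<Longrightarrow> arc_dist n e x < n"
  by (simp add: arc_dist_def)

lemma arc_dist_self [simp]: "arc_dist n e e = 0"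
  by (simp add: arc_dist_def)

lemma arc_dist_eq_0_iff: "x < n \<Longrightarrow> e < n \<Longrightarrow> arc_dist n e x = 0 \<longleftrightarrow> x = e"
  by (auto simp: arc_dist_eq)

lemma arc_dist_add:
  assumes "a < n" "b < n" "c < n"
  shows "arc_dist n a c = (arc_dist n a b + arc_dist n b c) mod n"
proof -
  have "(a + n - b) + (b + n - c) = (a + n - c) + n" using assms by simp
  then show ?thesis by (simp add: arc_dist_def mod_add_eq)
qed

lemma arc_dist_swap: "a < n \<Longrightarrow> b < n \<Longrightarrow> a \<noteq> b \<Longrightarrow> arc_dist n a b + arc_dist n b a = n"
  by (auto simp: arc_dist_eq)

lemma arc_dist_Suc_mod_self: "2 \<le> n \<Longrightarrow> e < n \<Longrightarrow> arc_dist n (Suc e mod n) e = 1"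
  by (cases "Suc e = n") (auto simp: arc_dist_eq)

lemma arc_dist_Suc_mod:
  assumes "e < n" "x < n"
  shows "arc_dist n (Suc e mod n) (Suc x mod n) = arc_dist n e x"
  using assms by (cases "Suc e = n"; cases "Suc x = n") (auto simp: arc_dist_eq)

lemma exists_arc_dist: "d < n \<Longrightarrow> e < n \<Longrightarrow> \<exists>z<n. arc_dist n e z = d"
  by (cases "d \<le> e") (auto simp: arc_dist_eq intro: exI[of _ "e - d"] exI[of _ "e + n - d"])

lemma arc_subset: "arc n L e \<subseteq> {..<n}"
  by (auto simp: arc_def)

lemma arc_one: "t < n \<Longrightarrow> arc n 1 t = {t}"
  by (auto simp: arc_def arc_dist_eq_0_iff)

lemma end_mem_arc: "e < n \<Longrightarrow> 1 \<le> L \<Longrightarrow> e \<in> arc n L e"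
  by (simp add: arc_def)

lemma image_Suc_mod_arc:
  assumes e: "e < n"
  shows "(\<lambda>x. Suc x mod n) ` arc n L e = arc n L (Suc e mod n)"
proof -
  have "y \<in> (\<lambda>x. Suc x mod n) ` {..<n}" if "y < n" for y
  proof
    show "y = Suc ((y + n - 1) mod n) mod n" using that by (cases y) (auto simp: mod_Suc)
  qed (use that in simp)
  then show ?thesis
    using e by (fastforce simp: arc_def arc_dist_Suc_mod)
qed

lemma arc_ne_full: "e < n \<Longrightarrow> L < n \<Longrightarrow> arc n L e \<noteq> {..<n}"
  using exists_arc_dist[of L n e] by (auto simp: arc_def)

lemma arc_not_subset:
  assumes e: "e < n" and e': "e' < n" and L: "L' \<le> L" "L \<le> n" "1 \<le> L'" "L' < n"
    and new: "L' < L \<or> e \<noteq> e'"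
  shows "\<not> arc n L e \<subseteq> arc n L' e'"
proof
  assume sub: "arc n L e \<subseteq> arc n L' e'"
  then have "e \<in> arc n L' e'" using end_mem_arc[OF e, of L] L by auto
  then have dl: "arc_dist n e' e < L'" by (simp add: arc_def)
  define d where "d = L' - arc_dist n e' e"
  have "d < L"
  proof (cases "L' < L")
    case False
    then have "e \<noteq> e'" and "L' = L" using new L by auto
    then have "arc_dist n e' e \<noteq> 0" using arc_dist_eq_0_iff[OF e e'] by simp
    then show ?thesis using dl \<open>L' = L\<close> by (simp add: d_def)
  qed (simp add: d_def)
  then obtain z where z: "z < n" "arc_dist n e z = d" using exists_arc_dist[of d n e] L e by auto
  have "arc_dist n e' z = L'"
    using arc_dist_add[OF e' e z(1)] z dl L by (simp add: d_def)
  then show False using sub z \<open>d < L\<close> by (auto simp: arc_def)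
qed

definition wielandt_succ :: "nat \<Rightarrow> nat \<Rightarrow> nat set" where
  "wielandt_succ n x = (if x = n - 1 then {0, 1} else {Suc x})"

definition wielandt_step :: "nat \<Rightarrow> nat set \<Rightarrow> nat set" where
  "wielandt_step n S = (\<Union>x\<in>S. wielandt_succ n x)"

lemma wielandt_succ_subset: "2 \<le> n \<Longrightarrow> x < n \<Longrightarrow> wielandt_succ n x \<subseteq> {..<n}"
  by (auto simp: wielandt_succ_def)

lemma wielandt_step_eq:
  assumes "2 \<le> n" "S \<subseteq> {..<n}"
  shows "wielandt_step n S = (\<lambda>x. Suc x mod n) ` S \<union> (if n - 1 \<in> S then {1} else {})"
proof -
  have "wielandt_succ n x = {Suc x mod n} \<union> (if x = n - 1 then {1} else {})" if "x < n" for x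
    using that assms(1) by (auto simp: wielandt_succ_def)
  then have "wielandt_step n S = (\<Union>x\<in>S. {Suc x mod n} \<union> (if x = n - 1 then {1} else {}))"
    unfolding wielandt_step_def using assms(2) by (intro SUP_cong) auto
  then show ?thesis by (auto split: if_splits)
qed

lemma wielandt_step_full:
  assumes n: "2 \<le> n" shows "wielandt_step n {..<n} = {..<n}"
proof -
  have full: "arc n n e = {..<n}" for e using arc_dist_lt n by (auto simp: arc_def)
  then have "(\<lambda>x. Suc x mod n) ` {..<n} = {..<n}"
    using image_Suc_mod_arc[of 0 n n] n by simp
  then show ?thesis using n by (auto simp: wielandt_step_eq)
qed

lemma wielandt_step_arc:
  assumes n: "2 \<le> n" and e: "Suc e < n"
  shows "wielandt_step n (arc n L e) = arc n L (Suc e)"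
proof -
  have "arc_dist n e (n - 1) = Suc e" "arc_dist n (Suc e) 1 = e" using e by (auto simp: arc_dist_eq)
  then have "1 \<in> arc n L (Suc e)" if "n - 1 \<in> arc n L e"
    using that e by (auto simp: arc_def)
  then show ?thesis
    using image_Suc_mod_arc[of e n L] e wielandt_step_eq[OF n arc_subset] by auto
qed

lemma wielandt_step_arc_turn:
  assumes n: "2 \<le> n" and L: "1 \<le> L"
  shows "wielandt_step n (arc n L (n - 1)) = arc n (Suc L) 1"
proof -
  have "n - 1 \<in> arc n L (n - 1)" using end_mem_arc[of "n - 1" n L] n L by simp
  moreover have "arc n L 0 \<union> {1} = arc n (Suc L) 1"
    using n by (auto simp: arc_def arc_dist_eq)
  ultimately show ?thesis
    using image_Suc_mod_arc[of "n - 1" n L] n wielandt_step_eq[OF n arc_subset] by auto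
qed

text \<open>The orbit of {0} under wielandt_step: after t < n steps it is {t}; for
  t = n + q (n - 1) + r with r < n - 1 it is the arc of length q + 2 ending at r + 1.\<close>
definition wielandt_len :: "nat \<Rightarrow> nat \<Rightarrow> nat" where
  "wielandt_len n t = (if t < n then 1 else (t - n) div (n - 1) + 2)"

definition wielandt_end :: "nat \<Rightarrow> nat \<Rightarrow> nat" where
  "wielandt_end n t = (if t < n then t else (t - n) mod (n - 1) + 1)"

definition wielandt_arc :: "nat \<Rightarrow> nat \<Rightarrow> nat set" where
  "wielandt_arc n t = arc n (wielandt_len n t) (wielandt_end n t)"

lemma wielandt_arc_small: "t < n \<Longrightarrow> wielandt_arc n t = {t}"
  using arc_one[of t n] by (simp add: wielandt_arc_def wielandt_len_def wielandt_end_def)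

lemma wielandt_len_pos: "1 \<le> wielandt_len n t"
  by (simp add: wielandt_len_def)

lemma wielandt_end_le:
  assumes "2 \<le> n" shows "wielandt_end n t \<le> n - 1"
proof -
  have "(t - n) mod (n - 1) < n - 1" using assms by simp
  then show ?thesis by (auto simp: wielandt_end_def)
qed

lemma wielandt_len_le:
  assumes n: "2 \<le> n" and t: "t \<le> (n - 1)^2"
  shows "wielandt_len n t \<le> n - 1"
proof (cases "t < n")
  case False
  obtain p where p: "n = p + 2" using n by (metis add.commute le_Suc_ex)
  have "t - n < p * (n - 1)" using t False p by (simp add: power2_eq_square algebra_simps)
  then have "(t - n) div (n - 1) < p" by (simp add: less_mult_imp_div_less)
  then show ?thesis using False p by (simp add: wielandt_len_def)
qed (use n in \<open>simp add: wielandt_len_def\<close>)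

lemma wielandt_Suc_inner:
  assumes n: "2 \<le> n" and e: "wielandt_end n t < n - 1"
  shows "wielandt_len n (Suc t) = wielandt_len n t" "wielandt_end n (Suc t) = Suc (wielandt_end n t)"
proof -
  have "wielandt_len n (Suc t) = wielandt_len n t \<and> wielandt_end n (Suc t) = Suc (wielandt_end n t)"
  proof (cases "t < n")
    case False
    then have "Suc ((t - n) mod (n - 1)) < n - 1" using e by (simp add: wielandt_end_def)
    then have "Suc (t - n) mod (n - 1) = Suc ((t - n) mod (n - 1))"
      "Suc (t - n) div (n - 1) = (t - n) div (n - 1)"
      by (simp_all add: mod_Suc div_Suc)
    then show ?thesis using False by (simp add: wielandt_len_def wielandt_end_def Suc_diff_le)
  qed (use e in \<open>simp add: wielandt_len_def wielandt_end_def\<close>)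
  then show "wielandt_len n (Suc t) = wielandt_len n t" "wielandt_end n (Suc t) = Suc (wielandt_end n t)"
    by simp_all
qed

lemma wielandt_Suc_turn:
  assumes n: "2 \<le> n" and e: "wielandt_end n t = n - 1"
  shows "wielandt_len n (Suc t) = Suc (wielandt_len n t)" "wielandt_end n (Suc t) = 1"
proof -
  have "wielandt_len n (Suc t) = Suc (wielandt_len n t) \<and> wielandt_end n (Suc t) = 1"
  proof (cases "t < n")
    case True
    then have "Suc t = n" using e by (simp add: wielandt_end_def)
    then show ?thesis using True by (simp add: wielandt_len_def wielandt_end_def)
  next
    case False
    then have "Suc ((t - n) mod (n - 1)) = n - 1" using e n by (simp add: wielandt_end_def)
    then have "Suc (t - n) mod (n - 1) = 0" "Suc (t - n) div (n - 1) = Suc ((t - n) div (n - 1))"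
      by (simp_all add: mod_Suc div_Suc)
    then show ?thesis using False by (simp add: wielandt_len_def wielandt_end_def Suc_diff_le)
  qed
  then show "wielandt_len n (Suc t) = Suc (wielandt_len n t)" "wielandt_end n (Suc t) = 1"
    by simp_all
qed

lemma wielandt_step_wielandt_arc:
  assumes n: "2 \<le> n"
  shows "wielandt_step n (wielandt_arc n t) = wielandt_arc n (Suc t)"
proof (cases "wielandt_end n t < n - 1")
  case True
  then show ?thesis
    using wielandt_step_arc[OF n] wielandt_Suc_inner[OF n True] by (simp add: wielandt_arc_def)
next
  case False
  then have "wielandt_end n t = n - 1" using wielandt_end_le[OF n, of t] by linarith
  then show ?thesis
    using wielandt_step_arc_turn[OF n wielandt_len_pos] wielandt_Suc_turn[OF n]
    by (simp add: wielandt_arc_def)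
qed

lemma wielandt_arc_earlier:
  assumes "t < t0" "n \<le> t0"
  shows "wielandt_len n t < wielandt_len n t0 \<or>
    (wielandt_len n t = wielandt_len n t0 \<and> wielandt_end n t \<noteq> wielandt_end n t0)"
proof (cases "t < n")
  case False
  have "(t - n) div (n - 1) \<le> (t0 - n) div (n - 1)" using assms by (intro div_le_mono) simp
  moreover have "(t - n) mod (n - 1) \<noteq> (t0 - n) mod (n - 1)"
    if "(t - n) div (n - 1) = (t0 - n) div (n - 1)"
  proof
    assume "(t - n) mod (n - 1) = (t0 - n) mod (n - 1)"
    then have "t - n = t0 - n" using that div_mult_mod_eq[of "t - n" "n - 1"]
      div_mult_mod_eq[of "t0 - n" "n - 1"] by simp
    with assms False show False by simp
  qed
  ultimately show ?thesis using False assms by (auto simp: wielandt_len_def wielandt_end_def)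
qed (use assms in \<open>simp add: wielandt_len_def\<close>)

section \<open>Degrees above n\<close>

lemma arc_union_complement:
  assumes n: "2 \<le> n" and e0: "e0 < n" and s0: "s0 < n" and L: "1 \<le> L" "L \<le> n - 1"
    and dist: "arc_dist n e0 s0 = L - 1"
  shows "arc n L (Suc e0 mod n) \<union> arc n (n - L) s0 = {..<n}"
proof (intro equalityI subsetI)
  fix x assume "x \<in> {..<n}"
  then have x: "x < n" by simp
  have sn: "Suc e0 mod n < n" using n by simp
  have d1: "arc_dist n (Suc e0 mod n) s0 = L"
    using arc_dist_add[OF sn e0 s0] arc_dist_Suc_mod_self[OF n e0] dist L n by simp
  then have "Suc e0 mod n \<noteq> s0" using L by auto
  then have d2: "arc_dist n s0 (Suc e0 mod n) = n - L" using arc_dist_swap[OF sn s0] d1 by simp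
  define w where "w = arc_dist n (Suc e0 mod n) x"
  show "x \<in> arc n L (Suc e0 mod n) \<union> arc n (n - L) s0"
  proof (cases "w < L")
    case False
    have "w < n" using arc_dist_lt n by (simp add: w_def)
    have "arc_dist n s0 x = (n - L + w) mod n"
      using arc_dist_add[OF s0 sn x] d2 by (simp add: w_def)
    also have "\<dots> = w - L" using False \<open>w < n\<close> L by (simp add: le_mod_geq)
    finally show ?thesis using x False \<open>w < n\<close> by (simp add: arc_def) arith
  qed (use x in \<open>simp add: arc_def w_def\<close>)
qed (use arc_subset in blast)

text \<open>An arc J containing both endpoints e0 and s0 of I = arc n L e0 either contains I or
  runs through the complement of I, and then its shift covers the complementary arc.\<close>
lemma arc_containing_endpoints:
  assumes n: "2 \<le> n" and e0: "e0 < n" and s0: "s0 < n" and L: "1 \<le> L" "L \<le> n - 1"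
    and dist: "arc_dist n e0 s0 = L - 1"
    and e': "e' < n" and L': "L' < n" and mem: "e0 \<in> arc n L' e'" "s0 \<in> arc n L' e'"
  shows "arc n L e0 \<subseteq> arc n L' e' \<or> arc n (n - L) s0 \<subseteq> arc n L' (Suc e' mod n)"
proof -
  define ue where "ue = arc_dist n e' e0"
  define us where "us = arc_dist n e' s0"
  have ue: "ue < L'" and us: "us < L'" using mem by (simp_all add: arc_def ue_def us_def)
  have us_eq: "us = (ue + (L - 1)) mod n"
    using arc_dist_add[OF e' e0 s0] dist by (simp add: us_def ue_def)
  show ?thesis
  proof (cases "ue + (L - 1) < n")
    case True
    have "arc n L e0 \<subseteq> arc n L' e'"
    proof
      fix x assume "x \<in> arc n L e0"
      then have x: "x < n" and dx: "arc_dist n e0 x < L" by (simp_all add: arc_def)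
      have "arc_dist n e' x = (ue + arc_dist n e0 x) mod n"
        using arc_dist_add[OF e' e0 x] by (simp add: ue_def)
      also have "\<dots> = ue + arc_dist n e0 x" using True dx by simp
      finally show "x \<in> arc n L' e'" using x dx True us_eq us by (simp add: arc_def)
    qed
    then show ?thesis ..
  next
    case False
    have us_eq': "us = ue + (L - 1) - n" using us_eq False ue L' L by (simp add: le_mod_geq)
    have sn: "Suc e' mod n < n" using n by simp
    have "arc n (n - L) s0 \<subseteq> arc n L' (Suc e' mod n)"
    proof
      fix x assume "x \<in> arc n (n - L) s0"
      then have x: "x < n" and dx: "arc_dist n s0 x < n - L" by (simp_all add: arc_def)
      have "arc_dist n e' x = (us + arc_dist n s0 x) mod n"
        using arc_dist_add[OF e' s0 x] by (simp add: us_def)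
      also have "\<dots> = us + arc_dist n s0 x" using us_eq' dx ue L' False by simp
      finally have "arc_dist n (Suc e' mod n) x = (1 + (us + arc_dist n s0 x)) mod n"
        using arc_dist_add[OF sn e' x] arc_dist_Suc_mod_self[OF n e'] by simp
      also have "\<dots> = 1 + (us + arc_dist n s0 x)" using us_eq' dx ue L' False L by simp
      finally show "x \<in> arc n L' (Suc e' mod n)" using x us_eq' dx ue L False by (simp add: arc_def)
    qed
    then show ?thesis ..
  qed
qed

lemma hyperedge_inactive_before:
  assumes n: "2 \<le> n" and t: "t < t0" and t0: "n \<le> t0" "t0 \<le> (n - 1)^2"
    and s0: "s0 < n" "arc_dist n (wielandt_end n t0) s0 = wielandt_len n t0 - 1"
    and mem: "wielandt_end n t0 \<in> wielandt_arc n t" "s0 \<in> wielandt_arc n t"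
  shows "arc n (n - wielandt_len n t0) s0 \<subseteq> wielandt_step n (wielandt_arc n t)"
proof -
  let ?L = "wielandt_len n t" and ?e = "wielandt_end n t"
  let ?L_final = "wielandt_len n t0" and ?e_final = "wielandt_end n t0"
  have e: "?e < n" "?e_final < n"
    using wielandt_end_le[OF n, of t] wielandt_end_le[OF n, of t0] n by linarith+
  have "?L \<le> n - 1" using wielandt_len_le[OF n, of t] t t0 by linarith
  then have L: "1 \<le> ?L" "?L < n" "?L_final \<le> n - 1"
    using wielandt_len_pos wielandt_len_le[OF n t0(2)] n by auto
  have "\<not> arc n ?L_final ?e_final \<subseteq> wielandt_arc n t"
    using arc_not_subset[OF e(2) e(1)] wielandt_arc_earlier[OF t t0(1)] L
    unfolding wielandt_arc_def by auto
  then have "arc n (n - ?L_final) s0 \<subseteq> arc n ?L (Suc ?e mod n)"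
    using arc_containing_endpoints[OF n e(2) s0(1) wielandt_len_pos L(3) s0(2) e(1) L(2)] mem
    unfolding wielandt_arc_def by blast
  also have "\<dots> = (\<lambda>x. Suc x mod n) ` wielandt_arc n t"
    using image_Suc_mod_arc[OF e(1)] by (simp add: wielandt_arc_def)
  also have "\<dots> \<subseteq> wielandt_step n (wielandt_arc n t)"
    using wielandt_step_eq[OF n] arc_subset by (auto simp: wielandt_arc_def)
  finally show ?thesis .
qed

text \<open>When arc_dist n (wielandt_end n t0) s0 = wielandt_len n t0 - 1, the points
  wielandt_end n t0 and s0 are the two ends of the arc wielandt_arc n t0, and the hyperedge
  sends them to the complementary arc.\<close>
definition wielandt_hyper_step :: "nat \<Rightarrow> nat \<Rightarrow> nat \<Rightarrow> nat set \<Rightarrow> nat set" where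
  "wielandt_hyper_step n t0 s0 = hyper_step (wielandt_succ n) (wielandt_end n t0) s0
     (arc n (n - wielandt_len n t0) s0)"

lemma wielandt_hyper_step_subset:
  "2 \<le> n \<Longrightarrow> S \<subseteq> {..<n} \<Longrightarrow> wielandt_hyper_step n t0 s0 S \<subseteq> {..<n}"
  unfolding wielandt_hyper_step_def by (intro hyper_step_subset wielandt_succ_subset arc_subset)

lemma funpow_wielandt_hyper_step:
  assumes n: "2 \<le> n" and t0: "n \<le> t0" "t0 \<le> (n - 1)^2"
    and s0: "s0 < n" "arc_dist n (wielandt_end n t0) s0 = wielandt_len n t0 - 1"
    and t: "t \<le> t0"
  shows "(wielandt_hyper_step n t0 s0 ^^ t) {0} = wielandt_arc n t"
  using t
proof (induction t)
  case (Suc t)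
  then have "t < t0" by simp
  have "wielandt_hyper_step n t0 s0 (wielandt_arc n t) = wielandt_arc n (Suc t)"
    using hyperedge_inactive_before[OF n \<open>t < t0\<close> t0 s0] wielandt_step_wielandt_arc[OF n]
    by (auto simp: wielandt_hyper_step_def hyper_step_def wielandt_step_def)
  with Suc show ?case by simp
qed (use wielandt_arc_small[of 0 n] n in simp)

lemma wielandt_hyper_step_final_arc:
  assumes n: "2 \<le> n" and t0: "t0 \<le> (n - 1)^2"
    and s0: "s0 < n" "arc_dist n (wielandt_end n t0) s0 = wielandt_len n t0 - 1"
  shows "wielandt_hyper_step n t0 s0 (wielandt_arc n t0) = {..<n}"
proof -
  let ?L = "wielandt_len n t0" and ?e = "wielandt_end n t0"
  have e: "?e < n" using wielandt_end_le[OF n, of t0] n by linarith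
  have L: "1 \<le> ?L" "?L \<le> n - 1" using wielandt_len_pos wielandt_len_le[OF n t0] .
  have mem: "?e \<in> wielandt_arc n t0" "s0 \<in> wielandt_arc n t0"
    using end_mem_arc[OF e L(1)] s0 L(1) by (auto simp: wielandt_arc_def arc_def)
  have "arc n ?L (Suc ?e mod n) \<subseteq> wielandt_step n (wielandt_arc n t0)"
    using image_Suc_mod_arc[OF e] wielandt_step_eq[OF n] arc_subset by (auto simp: wielandt_arc_def)
  then have "{..<n} \<subseteq> wielandt_hyper_step n t0 s0 (wielandt_arc n t0)"
    using arc_union_complement[OF n e s0(1) L s0(2)] mem
    by (auto simp: wielandt_hyper_step_def hyper_step_def wielandt_step_def)
  moreover have "wielandt_arc n t0 \<subseteq> {..<n}" by (simp add: wielandt_arc_def arc_subset)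
  ultimately show ?thesis using wielandt_hyper_step_subset[OF n] by blast
qed

lemma funpow_wielandt_hyper_step_lessThan:
  assumes n: "2 \<le> n"
  shows "(wielandt_hyper_step n t0 s0 ^^ t) {..<n} = {..<n}"
proof (induction t)
  case (Suc t)
  have "wielandt_step n {..<n} \<subseteq> wielandt_hyper_step n t0 s0 {..<n}"
    by (auto simp: wielandt_hyper_step_def hyper_step_def wielandt_step_def)
  with Suc show ?case
    using wielandt_step_full[OF n] wielandt_hyper_step_subset[OF n, of "{..<n}" t0 s0] by auto
qed simp

lemma large_degree_in_E_set:
  assumes m: "3 \<le> m" and n: "2 \<le> n" and k: "n < k" "k \<le> (n - 1)^2 + 1"
  shows "k \<in> E_set m n"
proof -
  define t0 where "t0 = k - 1"
  have t0: "n \<le> t0" "t0 \<le> (n - 1)^2" and k_eq: "k = Suc t0" using k by (auto simp: t0_def)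
  have "wielandt_len n t0 - 1 < n" "wielandt_end n t0 < n"
    using wielandt_len_le[OF n t0(2)] wielandt_end_le[OF n, of t0] n by linarith+
  then obtain s0 where s0: "s0 < n" "arc_dist n (wielandt_end n t0) s0 = wielandt_len n t0 - 1"
    using exists_arc_dist by blast
  let ?F = "wielandt_hyper_step n t0 s0"
  note orbit = funpow_wielandt_hyper_step[OF n t0 s0]
  have "(?F ^^ k) {0} = {..<n}"
    using orbit[of t0] wielandt_hyper_step_final_arc[OF n t0(2) s0] by (simp add: k_eq)
  have full: "(?F ^^ k) {j} = {..<n}" if "j < n" for j
  proof -
    have "(?F ^^ j) {0} = {j}" using orbit[of j] wielandt_arc_small[OF that] that t0 by simp
    then have "(?F ^^ k) {j} = (?F ^^ (k + j)) {0}" by (simp add: funpow_add)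
    also have "\<dots> = (?F ^^ j) ((?F ^^ k) {0})" by (subst add.commute) (simp add: funpow_add)
    finally show ?thesis
      using \<open>(?F ^^ k) {0} = {..<n}\<close> funpow_wielandt_hyper_step_lessThan[OF n] by simp
  qed
  have not_full: "(?F ^^ r) {0} \<noteq> {..<n}" if "r < k" for r
  proof -
    have "r \<le> (n - 1)^2" using that t0 k_eq by simp
    then have "wielandt_len n r < n" "wielandt_end n r < n"
      using wielandt_len_le[OF n, of r] wielandt_end_le[OF n, of r] n by linarith+
    then show ?thesis using orbit[of r] that k_eq arc_ne_full by (simp add: wielandt_arc_def)
  qed
  have "1 \<le> k" "0 < n" using k n by simp_all
  from hyper_tensor_degree_in_E_set[OF m this(1) wielandt_succ_subset[OF n] arc_subset
      full[unfolded wielandt_hyper_step_def] this(2) not_full[unfolded wielandt_hyper_step_def]]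
  show ?thesis .
qed

theorem theorem3p4:
  fixes m n :: nat
  assumes "m \<ge> 3" and "n \<ge> 2"
  shows "E_set m n = {1..(n - 1)^2 + 1}"
proof (intro equalityI subsetI)
  fix k assume "k \<in> E_set m n"
  then show "k \<in> {1..(n - 1)^2 + 1}"
    using primitive_degree_bounds[of m n] assms unfolding E_set_def by auto
next
  fix k assume "k \<in> {1..(n - 1)^2 + 1}"
  then show "k \<in> E_set m n"
    using small_degree_in_E_set[OF assms] large_degree_in_E_set[OF assms]
    by (cases "k \<le> n") auto
qed

end
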